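(* Let $c\in\mathbb{R}$ with $c>0$ and $h:\mathbb{N}\to(0,\infty]$ with $0<h(n)<\infty$ for all $n\in\mathbb{N}$. Consider the recurrence $$T(1)=c,\qquad T(n)=T(n-1)+h(n)\ \text{ for } n\ge2.$$ Then it has a unique solution $f_T\in\mathcal{RT}_c$. Moreover, if there exists $g\in\mathcal{RT}_c$ such that $\Gamma_T$ is an improver with respect to $g$, then $f_T\in\mathcal{O}(g)$.
   Context: $\mathbb{N}$ is the set of positive integers, $\omega$ the nonnegative integers. $\mathcal{RT}$ is the set of functions $\mathbb{N}\to(0,\infty]$ and $\mathcal{RT}_c=\{f\in\mathcal{RT}: f(1)=c\}$. $\Gamma_T:\mathcal{RT}_c\to\mathcal{RT}_c$ is defined by $\Gamma_T(f)(1)=c$ and $\Gamma_T(f)(n)=f(n-1)+h(n)$ for $n\ge2$. A functional $\Phi:C\to C$ ($C\subseteq\mathcal{RT}$) is an improver with respect to $f\in C$ if $\Phi^{n+1}(f)\le\Phi^n(f)$ pointwise for all $n\in\omega$ (with $\Phi^0(f)=f$). $f\in\mathcal{O}(g)$ means there exist $n_0\in\mathbb{N}$ and $C\ge0$ with $f(n)\le Cg(n)$ for all $n\ge n_0$. *)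

theory Defs
  imports "HOL-Library.Extended_Real"
begin

text \<open>Functions N -> (0,infinity] are modelled as nat => ereal; only arguments n >= 1 matter
  (the value at 0 is irrelevant and ignored everywhere).\<close>

definition RT :: "(nat \<Rightarrow> ereal) set" where
  "RT = {f. \<forall>n\<ge>1. 0 < f n}"

definition RT_c :: "real \<Rightarrow> (nat \<Rightarrow> ereal) set" where
  "RT_c c = {f \<in> RT. f 1 = ereal c}"

definition GammaT :: "real \<Rightarrow> (nat \<Rightarrow> real) \<Rightarrow> (nat \<Rightarrow> ereal) \<Rightarrow> (nat \<Rightarrow> ereal)" where
  "GammaT c h f = (\<lambda>n. if n \<le> 1 then ereal c else f (n - 1) + ereal (h n))"

definition improver :: "((nat \<Rightarrow> ereal) \<Rightarrow> (nat \<Rightarrow> ereal)) \<Rightarrow> (nat \<Rightarrow> ereal) \<Rightarrow> bool" where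
  "improver Phi f \<longleftrightarrow> (\<forall>k n. n \<ge> 1 \<longrightarrow> (Phi ^^ Suc k) f n \<le> (Phi ^^ k) f n)"

definition bigO :: "(nat \<Rightarrow> ereal) \<Rightarrow> (nat \<Rightarrow> ereal) \<Rightarrow> bool" where
  "bigO f g \<longleftrightarrow> (\<exists>n0\<ge>1. \<exists>C::real\<ge>0. \<forall>n\<ge>n0. f n \<le> ereal C * g n)"

definition solves_rec :: "real \<Rightarrow> (nat \<Rightarrow> real) \<Rightarrow> (nat \<Rightarrow> ereal) \<Rightarrow> bool" where
  "solves_rec c h f \<longleftrightarrow> f \<in> RT_c c \<and> f 1 = ereal c \<and>
     (\<forall>n\<ge>2. f n = f (n - 1) + ereal (h n))"

end

theory Submission
  imports Defs
begin

text \<open>The recurrence is solved by the partial sums \<open>c + h 2 + \<dots> + h n\<close>. Each application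
  of \<open>\<Gamma>\<^sub>T\<close> to a function with value \<open>c\<close> at 1 makes it agree with these sums on one more
  argument, so \<open>\<Gamma>\<^sub>T\<^sup>n(g)\<close> agrees with \<open>f\<^sub>T\<close> at \<open>n\<close>; for an improver \<open>g\<close> the iterates
  decrease, hence \<open>f\<^sub>T \<le> g\<close> everywhere and \<open>f\<^sub>T \<in> O(g)\<close> with constant 1.\<close>

definition recurrence_solution :: "real \<Rightarrow> (nat \<Rightarrow> real) \<Rightarrow> nat \<Rightarrow> ereal" where
  "recurrence_solution c h n = ereal (c + (\<Sum>i=2..n. h i))"

lemma recurrence_solution_1 [simp]: "recurrence_solution c h (Suc 0) = ereal c"
  by (simp add: recurrence_solution_def)

lemma recurrence_solution_Suc:
  assumes "m \<ge> 1"
  shows "recurrence_solution c h (Suc m) = recurrence_solution c h m + ereal (h (Suc m))"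
  using assms by (simp add: recurrence_solution_def sum.cl_ivl_Suc)

lemma recurrence_solution_pos:
  assumes "c > 0" and "\<forall>n\<ge>1. 0 < h n"
  shows "0 < recurrence_solution c h n"
proof -
  have "0 \<le> (\<Sum>i=2..n. h i)"
    using assms(2) by (intro sum_nonneg) (simp add: less_imp_le)
  with assms(1) show ?thesis
    by (simp add: recurrence_solution_def)
qed

lemma solves_rec_recurrence_solution:
  assumes "c > 0" and "\<forall>n\<ge>1. 0 < h n"
  shows "solves_rec c h (recurrence_solution c h)"
proof -
  have "recurrence_solution c h n = recurrence_solution c h (n - 1) + ereal (h n)" if "n \<ge> 2" for n
    using recurrence_solution_Suc[of "n - 1" c h] that by simp
  with recurrence_solution_pos[OF assms] show ?thesis
    by (simp add: solves_rec_def RT_c_def RT_def)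
qed

lemma solves_rec_unique:
  assumes "solves_rec c h f" and "n \<ge> 1"
  shows "f n = recurrence_solution c h n"
  using assms(2)
proof (induction n rule: dec_induct)
  case base
  then show ?case using assms(1) by (simp add: solves_rec_def)
next
  case (step m)
  have "f (Suc m) = f m + ereal (h (Suc m))"
    using assms(1) step.hyps unfolding solves_rec_def
    by (metis Suc_le_mono diff_Suc_1 one_add_one plus_1_eq_Suc)
  with step.IH recurrence_solution_Suc[OF step.hyps(1)] show ?case
    by simp
qed

lemma funpow_GammaT_eq_recurrence_solution:
  assumes "g 1 = ereal c" and "1 \<le> n" and "n \<le> Suc k"
  shows "(GammaT c h ^^ k) g n = recurrence_solution c h n"
  using assms(2,3)
proof (induction k arbitrary: n)
  case 0
  then have "n = 1" by simp
  with assms(1) show ?case by simp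
next
  case (Suc k)
  show ?case
  proof (cases "n = 1")
    case True
    then show ?thesis by (simp add: GammaT_def)
  next
    case False
    then obtain m where n: "n = Suc m" and "m \<ge> 1"
      using Suc.prems(1) by (cases n) auto
    then have "(GammaT c h ^^ Suc k) g n = (GammaT c h ^^ k) g m + ereal (h n)"
      by (simp add: GammaT_def)
    also have "\<dots> = recurrence_solution c h n"
      using Suc.IH[of m] Suc.prems \<open>m \<ge> 1\<close> recurrence_solution_Suc n by simp
    finally show ?thesis .
  qed
qed

lemma improver_funpow_le:
  assumes "improver Phi g" and "n \<ge> 1"
  shows "(Phi ^^ k) g n \<le> g n"
proof (induction k)
  case 0
  then show ?case by simp
next
  case (Suc k)
  have "(Phi ^^ Suc k) g n \<le> (Phi ^^ k) g n"
    using assms unfolding improver_def by blast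
  then show ?case using Suc.IH by (rule order_trans)
qed

lemma improver_GammaT_recurrence_solution_le:
  assumes "g 1 = ereal c" and "improver (GammaT c h) g" and "n \<ge> 1"
  shows "recurrence_solution c h n \<le> g n"
proof -
  have "recurrence_solution c h n = (GammaT c h ^^ n) g n"
    using funpow_GammaT_eq_recurrence_solution[of g c n n h] assms(1,3) by simp
  also have "\<dots> \<le> g n"
    using assms(2,3) by (rule improver_funpow_le)
  finally show ?thesis .
qed

theorem corollary12:
  fixes c :: real and h :: "nat \<Rightarrow> real"
  assumes "c > 0"
    and "\<forall>n\<ge>1. 0 < h n"
  shows "\<exists>fT. solves_rec c h fT
           \<and> (\<forall>f. solves_rec c h f \<longrightarrow> (\<forall>n\<ge>1. f n = fT n))
           \<and> (\<forall>g \<in> RT_c c. improver (GammaT c h) g \<longrightarrow> bigO fT g)"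
proof (intro exI conjI allI impI ballI)
  show "solves_rec c h (recurrence_solution c h)"
    using assms by (rule solves_rec_recurrence_solution)
next
  fix f :: "nat \<Rightarrow> ereal" and n :: nat
  assume "solves_rec c h f" and "n \<ge> 1"
  then show "f n = recurrence_solution c h n"
    by (rule solves_rec_unique)
next
  fix g assume "g \<in> RT_c c" and "improver (GammaT c h) g"
  then have "\<forall>n\<ge>1. recurrence_solution c h n \<le> ereal 1 * g n"
    using improver_GammaT_recurrence_solution_le by (simp add: RT_c_def)
  then show "bigO (recurrence_solution c h) g"
    unfolding bigO_def by (metis order_refl zero_le_one)
qed

end
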